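(* For $m\ge 1$, let $\mathbf{D}_m$ be the $m\times m$ symmetric tridiagonal matrix with diagonal entries $d_{kk}=4k^2-6k+\tfrac52$ ($1\le k\le m$), off-diagonal entries $d_{k,k+1}=d_{k+1,k}=-k(2k-1)$ ($1\le k\le m-1$), and all other entries zero. Then for every $m\in\mathbb{N}$ its smallest eigenvalue satisfies $$\lambda_{\min}(\mathbf{D}_m)<\frac{1}{\ln\big(m+\frac12\big)}.$$ *)

theory Defs
  imports Complex_Main "Jordan_Normal_Form.Char_Poly"
begin

text \<open>The m x m symmetric tridiagonal matrix D_m. Jordan_Normal_Form matrices are 0-indexed,
  so row/column i corresponds to the paper's index k = i + 1.\<close>
definition Dmat :: "nat \<Rightarrow> real mat" where
  "Dmat m = mat m m (\<lambda>(i, j).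
     let k = real (i + 1) in
     if i = j then 4 * k^2 - 6 * k + 5/2
     else if j = i + 1 then - k * (2 * k - 1)
     else if i = j + 1 then - real (j + 1) * (2 * real (j + 1) - 1)
     else 0)"

definition lambda_min :: "real mat \<Rightarrow> real" where
  "lambda_min A = Min {l. eigenvalue A l}"

end

theory Submission
  imports Defs
begin

text \<open>
  For a real symmetric matrix D the infimum t of the Rayleigh quotient x^T D x / |x|^2 is an
  eigenvalue: otherwise D - t I would be invertible and positive semidefinite, hence coercive, and
  t could be increased. So it suffices to exhibit one vector with a small Rayleigh quotient.
  For D = Dmat m take the solution x of D x = e_0, which is explicit (indices from 0): with the
  Wallis ratios u_k = binom(2k, k) / 4^k,
    x_k = u_k * sum_{k <= j < m} 2 / ((2j + 1) u_j)^2.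
  Then x^T D x = x_0 and |x|^2 >= x_0^2, so the smallest eigenvalue is below 1 / x_0; and
  u_j^2 <= 1 / (2j + 1) gives x_0 >= sum_{j < m} 2 / (2j + 1) >= ln (2m + 1) > ln (m + 1/2).
\<close>

definition quad_form :: "nat \<Rightarrow> (nat \<Rightarrow> nat \<Rightarrow> real) \<Rightarrow> (nat \<Rightarrow> real) \<Rightarrow> real" where
  "quad_form n a v = (\<Sum>i<n. \<Sum>j<n. a i j * v i * v j)"

definition sq_norm :: "nat \<Rightarrow> (nat \<Rightarrow> real) \<Rightarrow> real" where
  "sq_norm n v = (\<Sum>i<n. (v i)\<^sup>2)"

lemma sq_norm_nonneg: "sq_norm n v \<ge> 0"
  unfolding sq_norm_def by (intro sum_nonneg) auto

lemma sq_le_sq_norm: "i < n \<Longrightarrow> (v i)\<^sup>2 \<le> sq_norm n v"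
  unfolding sq_norm_def by (rule member_le_sum) auto

lemma abs_le_sqrt_sq_norm: "i < n \<Longrightarrow> \<bar>v i\<bar> \<le> sqrt (sq_norm n v)"
  using real_sqrt_le_mono[OF sq_le_sq_norm[of i n v]] by simp

lemma abs_mult_le_sq_norm:
  assumes "i < n" "j < n"
  shows "\<bar>v i\<bar> * \<bar>v j\<bar> \<le> sq_norm n v"
proof -
  have "\<bar>v i\<bar> * \<bar>v j\<bar> \<le> sqrt (sq_norm n v) * sqrt (sq_norm n v)"
    by (intro mult_mono abs_le_sqrt_sq_norm assms) (auto simp: sq_norm_nonneg)
  then show ?thesis
    using sq_norm_nonneg[of n v] by simp
qed

lemma sq_norm_eq_0_imp_quad_form_eq_0: "sq_norm n v = 0 \<Longrightarrow> quad_form n a v = 0"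
  unfolding sq_norm_def quad_form_def by (simp add: sum_nonneg_eq_0_iff)

lemma abs_quad_form_le: "\<bar>quad_form n a v\<bar> \<le> (\<Sum>i<n. \<Sum>j<n. \<bar>a i j\<bar>) * sq_norm n v"
proof -
  have "\<bar>quad_form n a v\<bar> \<le> (\<Sum>i<n. \<Sum>j<n. \<bar>a i j\<bar> * (\<bar>v i\<bar> * \<bar>v j\<bar>))"
    unfolding quad_form_def
    by (rule order_trans[OF sum_abs sum_mono], rule order_trans[OF sum_abs]) (simp add: abs_mult mult.assoc)
  also have "\<dots> \<le> (\<Sum>i<n. \<Sum>j<n. \<bar>a i j\<bar> * sq_norm n v)"
    by (intro sum_mono mult_left_mono abs_mult_le_sq_norm) auto
  finally show ?thesis
    by (simp add: sum_distrib_right)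
qed

lemma square_linear_form_le: "(\<Sum>j<n. g j * y j)\<^sup>2 \<le> (\<Sum>j<n. \<bar>g j\<bar>)\<^sup>2 * sq_norm n y"
proof -
  have "\<bar>\<Sum>j<n. g j * y j\<bar> \<le> (\<Sum>j<n. \<bar>g j\<bar> * sqrt (sq_norm n y))"
    by (rule order_trans[OF sum_abs sum_mono]) (auto simp: abs_mult intro!: mult_left_mono abs_le_sqrt_sq_norm)
  then have "\<bar>\<Sum>j<n. g j * y j\<bar> \<le> (\<Sum>j<n. \<bar>g j\<bar>) * sqrt (sq_norm n y)"
    by (simp add: sum_distrib_right)
  from power_mono[OF this, of 2] show ?thesis
    using sq_norm_nonneg by (simp add: power_mult_distrib)
qed

lemma quad_form_diff:
  assumes "\<And>i j. i < n \<Longrightarrow> j < n \<Longrightarrow> b i j = b j i"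
  shows "quad_form n b (\<lambda>i. v i - s * y i)
    = quad_form n b v - 2 * s * (\<Sum>i<n. y i * (\<Sum>j<n. b i j * v j)) + s\<^sup>2 * quad_form n b y"
proof -
  have expand: "quad_form n b (\<lambda>i. v i - s * y i) = quad_form n b v - s * (\<Sum>i<n. \<Sum>j<n. b i j * v i * y j)
      - s * (\<Sum>i<n. \<Sum>j<n. b i j * y i * v j) + s\<^sup>2 * quad_form n b y"
    unfolding quad_form_def
    by (simp add: sum_distrib_left sum_subtractf sum.distrib algebra_simps power2_eq_square)
  have cross: "(\<Sum>i<n. \<Sum>j<n. b i j * y i * v j) = (\<Sum>i<n. y i * (\<Sum>j<n. b i j * v j))"
    by (simp add: sum_distrib_left mult_ac)
  have "(\<Sum>i<n. \<Sum>j<n. b i j * v i * y j) = (\<Sum>j<n. \<Sum>i<n. b j i * y j * v i)"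
    by (subst sum.swap) (intro sum.cong refl, simp add: assms mult_ac)
  also have "\<dots> = (\<Sum>i<n. y i * (\<Sum>j<n. b i j * v j))"
    by (simp add: sum_distrib_left mult_ac)
  finally have cross': "(\<Sum>i<n. \<Sum>j<n. b i j * v i * y j) = (\<Sum>i<n. y i * (\<Sum>j<n. b i j * v j))" .
  show ?thesis
    unfolding expand cross cross' by (simp add: algebra_simps)
qed

lemma quad_form_shift:
  "quad_form n (\<lambda>i j. a i j - (if i = j then t else 0)) v = quad_form n a v - t * sq_norm n v"
proof -
  have "(\<Sum>i<n. \<Sum>j<n. (if i = j then t else 0) * v i * v j) = (\<Sum>i<n. t * (v i)\<^sup>2)"
    by (intro sum.cong refl) (simp add: if_distrib[of "\<lambda>x. x * _"] power2_eq_square cong: if_cong)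
  then show ?thesis
    unfolding quad_form_def sq_norm_def by (simp add: sum_subtractf algebra_simps sum_distrib_left)
qed

lemma quad_form_coercive:
  assumes sym: "\<And>i j. i < n \<Longrightarrow> j < n \<Longrightarrow> b i j = b j i"
    and psd: "\<And>v. quad_form n b v \<ge> 0"
    and inverse: "\<And>v i. i < n \<Longrightarrow> (\<Sum>j<n. g i j * (\<Sum>k<n. b j k * v k)) = v i"
  shows "\<exists>e>0. \<forall>v. quad_form n b v \<ge> e * sq_norm n v"
proof -
  define K where "K = 1 + (\<Sum>i<n. \<Sum>j<n. \<bar>b i j\<bar>)"
  define G where "G = 1 + (\<Sum>i<n. (\<Sum>j<n. \<bar>g i j\<bar>)\<^sup>2)"
  have "K > 0" "G > 0"
    unfolding K_def G_def by (simp_all add: add_pos_nonneg sum_nonneg)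
  have "quad_form n b v \<ge> 1 / (K * G) * sq_norm n v" for v
  proof -
    \<comment> \<open>Positivity at v - y/K gives |y|^2 <= K q(v), and v = g y gives |v|^2 <= G |y|^2.\<close>
    define y where "y i = (\<Sum>k<n. b i k * v k)" for i
    have "sq_norm n v = (\<Sum>i<n. (\<Sum>j<n. g i j * y j)\<^sup>2)"
      unfolding sq_norm_def y_def by (intro sum.cong refl) (simp add: inverse)
    also have "\<dots> \<le> (\<Sum>i<n. (\<Sum>j<n. \<bar>g i j\<bar>)\<^sup>2 * sq_norm n y)"
      by (intro sum_mono square_linear_form_le)
    also have "\<dots> = (G - 1) * sq_norm n y"
      by (simp add: G_def sum_distrib_right)
    also have "\<dots> \<le> G * sq_norm n y"
      using sq_norm_nonneg[of n y] by (simp add: algebra_simps)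
    finally have v_le_y: "sq_norm n v \<le> G * sq_norm n y" .
    have y_bound: "quad_form n b y \<le> K * sq_norm n y"
      using abs_quad_form_le[of n b y] sq_norm_nonneg[of n y] by (simp add: K_def algebra_simps)
    have "0 \<le> quad_form n b (\<lambda>i. v i - 1 / K * y i)"
      by (rule psd)
    also have "\<dots> = quad_form n b v - 2 / K * sq_norm n y + (1 / K)\<^sup>2 * quad_form n b y"
      by (subst quad_form_diff[OF sym]) (simp_all add: y_def sq_norm_def power2_eq_square)
    also have "\<dots> \<le> quad_form n b v - 2 / K * sq_norm n y + (1 / K)\<^sup>2 * (K * sq_norm n y)"
      using y_bound by (intro add_left_mono mult_left_mono) auto
    also have "\<dots> = quad_form n b v - sq_norm n y / K"
      using \<open>K > 0\<close> by (simp add: field_simps power2_eq_square)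
    finally have "sq_norm n y \<le> K * quad_form n b v"
      using \<open>K > 0\<close> by (simp add: field_simps)
    with v_le_y have "sq_norm n v \<le> G * (K * quad_form n b v)"
      by (rule order_trans[OF _ mult_left_mono]) (use \<open>G > 0\<close> in simp)
    then show ?thesis
      using \<open>K > 0\<close> \<open>G > 0\<close> by (simp add: field_simps)
  qed
  then show ?thesis
    using \<open>K > 0\<close> \<open>G > 0\<close> by (intro exI[of _ "1 / (K * G)"]) auto
qed

section \<open>Rayleigh quotients and eigenvalues\<close>

lemma adj_mat_div_det_inverse:
  fixes B :: "'a :: field mat"
  assumes B: "B \<in> carrier_mat n n" and "det B \<noteq> 0" and "i < n"
  shows "(\<Sum>j<n. adj_mat B $$ (i, j) / det B * (\<Sum>k<n. B $$ (j, k) * v k)) = v i"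
proof -
  define g where "g j = adj_mat B $$ (i, j) / det B" for j
  have "(\<Sum>j<n. g j * B $$ (j, k)) = (if i = k then 1 else 0)" if "k < n" for k
  proof -
    have "(\<Sum>j<n. adj_mat B $$ (i, j) * B $$ (j, k)) = (adj_mat B * B) $$ (i, k)"
      using adj_mat(1)[OF B] B \<open>i < n\<close> that
      by (simp add: scalar_prod_def lessThan_atLeast0 row_def col_def)
    also have "\<dots> = (if i = k then det B else 0)"
      using adj_mat(3)[OF B] \<open>i < n\<close> that by simp
    finally show ?thesis
      using \<open>det B \<noteq> 0\<close> by (simp add: g_def sum_divide_distrib[symmetric])
  qed
  then have "(\<Sum>k<n. (\<Sum>j<n. g j * B $$ (j, k)) * v k) = (\<Sum>k<n. if i = k then v k else 0)"
    by (intro sum.cong) simp_all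
  also have "\<dots> = v i"
    using \<open>i < n\<close> by simp
  finally show ?thesis
    unfolding g_def[symmetric] sum_distrib_left sum_distrib_right mult.assoc
    by (subst sum.swap) simp
qed

lemma rayleigh_infimum_is_eigenvalue:
  fixes A :: "real mat"
  assumes A: "A \<in> carrier_mat n n"
    and sym: "\<And>i j. i < n \<Longrightarrow> j < n \<Longrightarrow> A $$ (i, j) = A $$ (j, i)"
    and lower: "\<And>v. t * sq_norm n v \<le> quad_form n (\<lambda>i j. A $$ (i, j)) v"
    and sharp: "\<And>e. e > 0 \<Longrightarrow> \<exists>v. quad_form n (\<lambda>i j. A $$ (i, j)) v < (t + e) * sq_norm n v"
  shows "eigenvalue A t"
proof (rule ccontr)
  assume "\<not> eigenvalue A t"
  define B where "B = char_matrix A t"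
  have B: "B \<in> carrier_mat n n" and "det B \<noteq> 0"
    using A \<open>\<not> eigenvalue A t\<close> eigenvalue_det[OF A] by (auto simp: B_def)
  define b where "b = (\<lambda>i j. A $$ (i, j) - (if i = j then t else 0))"
  have B_eq: "B $$ (i, j) = b i j" if "i < n" "j < n" for i j
    using A that by (simp add: B_def b_def char_matrix_def)
  have "\<exists>e>0. \<forall>v. quad_form n b v \<ge> e * sq_norm n v"
  proof (rule quad_form_coercive)
    show "b i j = b j i" if "i < n" "j < n" for i j
      using sym[OF that] by (simp add: b_def)
    show "quad_form n b v \<ge> 0" for v
      using lower[of v] by (simp add: b_def quad_form_shift)
    show "(\<Sum>j<n. adj_mat B $$ (i, j) / det B * (\<Sum>k<n. b j k * v k)) = v i" if "i < n" for v i
      using adj_mat_div_det_inverse[OF B \<open>det B \<noteq> 0\<close> that, of v] by (simp add: B_eq)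
  qed
  then obtain e where "e > 0"
    and coercive: "\<And>v. e * sq_norm n v \<le> quad_form n (\<lambda>i j. A $$ (i, j)) v - t * sq_norm n v"
    by (auto simp: b_def quad_form_shift)
  obtain v where "quad_form n (\<lambda>i j. A $$ (i, j)) v < (t + e) * sq_norm n v"
    using sharp[OF \<open>e > 0\<close>] by blast
  with coercive[of v] show False
    unfolding distrib_right by linarith
qed

lemma exists_eigenvalue_less_rayleigh_quotient:
  fixes A :: "real mat"
  assumes A: "A \<in> carrier_mat n n"
    and sym: "\<And>i j. i < n \<Longrightarrow> j < n \<Longrightarrow> A $$ (i, j) = A $$ (j, i)"
    and x: "quad_form n (\<lambda>i j. A $$ (i, j)) x < c * sq_norm n x"
  shows "\<exists>t<c. eigenvalue A t"
proof -
  define q where "q = quad_form n (\<lambda>i j. A $$ (i, j))"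
  define T where "T = {q v / sq_norm n v | v. sq_norm n v > 0}"
  have "sq_norm n x \<noteq> 0"
    using x sq_norm_eq_0_imp_quad_form_eq_0 by force
  then have "sq_norm n x > 0"
    using sq_norm_nonneg[of n x] by simp
  then have "q x / sq_norm n x \<in> T"
    by (auto simp: T_def)
  have "bdd_below T"
  proof
    fix r assume "r \<in> T"
    then obtain v where r: "r = q v / sq_norm n v" and "sq_norm n v > 0"
      by (auto simp: T_def)
    define K where "K = (\<Sum>i<n. \<Sum>j<n. \<bar>A $$ (i, j)\<bar>)"
    have "- K * sq_norm n v \<le> q v"
      using abs_quad_form_le[of n "\<lambda>i j. A $$ (i, j)" v] by (simp add: q_def K_def abs_le_iff)
    then show "- K \<le> r"
      unfolding r using \<open>sq_norm n v > 0\<close> by (simp add: le_divide_eq)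
  qed
  define t where "t = Inf T"
  have lower: "t * sq_norm n v \<le> q v" for v
  proof (cases "sq_norm n v > 0")
    case True
    then have "t \<le> q v / sq_norm n v"
      unfolding t_def using \<open>bdd_below T\<close> by (intro cInf_lower) (auto simp: T_def)
    with True show ?thesis
      by (simp add: field_simps)
  next
    case False
    then have "sq_norm n v = 0"
      using sq_norm_nonneg[of n v] by simp
    then show ?thesis
      by (simp add: q_def sq_norm_eq_0_imp_quad_form_eq_0)
  qed
  have sharp: "\<exists>v. q v < (t + e) * sq_norm n v" if "e > 0" for e
  proof (rule ccontr)
    assume "\<nexists>v. q v < (t + e) * sq_norm n v"
    then have "t + e \<le> r" if "r \<in> T" for r
      using that by (auto simp: T_def le_divide_eq not_less)
    then have "t + e \<le> Inf T"
      using \<open>q x / sq_norm n x \<in> T\<close> by (intro cInf_greatest) auto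
    with \<open>e > 0\<close> show False
      by (simp add: t_def)
  qed
  have "t * sq_norm n x < c * sq_norm n x"
    using lower[of x] x by (simp add: q_def)
  then have "t < c"
    using \<open>sq_norm n x > 0\<close> by (simp add: mult_less_cancel_right_pos)
  moreover have "eigenvalue A t"
    using A sym lower sharp unfolding q_def by (rule rayleigh_infimum_is_eigenvalue)
  ultimately show ?thesis
    by blast
qed

lemma lambda_min_le_eigenvalue:
  assumes A: "A \<in> carrier_mat n n" and "eigenvalue A t"
  shows "lambda_min A \<le> t"
proof -
  have "char_poly A \<noteq> 0"
    using degree_monic_char_poly[OF A] by auto
  then have "finite {l. poly (char_poly A) l = 0}"
    by (rule poly_roots_finite)
  then have "finite {l. eigenvalue A l}"
    using eigenvalue_root_char_poly[OF A] by simp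
  then show ?thesis
    unfolding lambda_min_def using \<open>eigenvalue A t\<close> by (intro Min_le) auto
qed

section \<open>The solution of Dmat m x = e_0\<close>

fun wallis_ratio :: "nat \<Rightarrow> real" where
  "wallis_ratio 0 = 1"
| "wallis_ratio (Suc i) = wallis_ratio i * (2 * real i + 1) / (2 * real i + 2)"

definition tail_sum :: "nat \<Rightarrow> nat \<Rightarrow> real" where
  "tail_sum m i = (\<Sum>j = i..<m. 2 / ((2 * real j + 1) * wallis_ratio j)\<^sup>2)"

definition test_vec :: "nat \<Rightarrow> nat \<Rightarrow> real" where
  "test_vec m i = wallis_ratio i * tail_sum m i"

(* For k >= 1, flux m k is the weighted difference k (2k - 1) (x (k-1) - x k) of x = test_vec m,
   see test_vec_diff; its value 1 at k = 0 produces the right-hand side e_0. *)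
definition flux :: "nat \<Rightarrow> nat \<Rightarrow> real" where
  "flux m k = 1 / wallis_ratio k + real k * wallis_ratio k * tail_sum m k"

lemma wallis_ratio_pos: "wallis_ratio i > 0"
  by (induction i) auto

lemma wallis_ratio_sq_le: "(wallis_ratio i)\<^sup>2 \<le> 1 / (2 * real i + 1)"
proof (induction i)
  case 0
  then show ?case by simp
next
  case (Suc i)
  define a where "a = 2 * real i + 1"
  have a: "a > 0"
    unfolding a_def by simp
  have "(wallis_ratio (Suc i))\<^sup>2 = (wallis_ratio i)\<^sup>2 * (a / (a + 1))\<^sup>2"
    by (simp add: a_def power_mult_distrib power_divide add.commute)
  also have "\<dots> \<le> 1 / a * (a / (a + 1))\<^sup>2"
    using Suc by (intro mult_right_mono) (auto simp: a_def)
  also have "\<dots> = a / (a + 1)\<^sup>2"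
    using a by (simp add: field_simps power2_eq_square)
  also have "\<dots> \<le> 1 / (a + 2)"
  proof -
    have "a * (a + 2) \<le> (a + 1)\<^sup>2"
      by (simp add: power2_eq_square algebra_simps)
    then show ?thesis
      using a by (simp add: divide_simps)
  qed
  finally show ?case
    by (simp add: a_def add.commute add.left_commute)
qed

lemma tail_sum_Suc: "i < m \<Longrightarrow> tail_sum m i = 2 / ((2 * real i + 1) * wallis_ratio i)\<^sup>2 + tail_sum m (Suc i)"
  unfolding tail_sum_def by (simp add: sum.atLeast_Suc_lessThan)

lemma ln_le_sum_odd_inverse: "ln (2 * real m + 1) \<le> (\<Sum>j<m. 2 / (2 * real j + 1))"
proof (induction m)
  case 0
  then show ?case by simp
next
  case (Suc m)
  have pos: "2 * real m + 1 > 0"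
    by simp
  have "1 + 2 / (2 * real m + 1) = (2 * real (Suc m) + 1) / (2 * real m + 1)"
    using pos by (simp add: field_simps)
  then have "ln (2 * real (Suc m) + 1) = ln (2 * real m + 1) + ln (1 + 2 / (2 * real m + 1))"
    using pos by (simp add: ln_div)
  also have "ln (1 + 2 / (2 * real m + 1)) \<le> 2 / (2 * real m + 1)"
    by (rule ln_add_one_self_le_self) simp
  finally show ?case
    using Suc by simp
qed

lemma ln_le_test_vec_0: "ln (2 * real m + 1) \<le> test_vec m 0"
proof -
  have "2 / (2 * real j + 1) \<le> 2 / ((2 * real j + 1) * wallis_ratio j)\<^sup>2" for j
  proof -
    have "((2 * real j + 1) * wallis_ratio j)\<^sup>2 \<le> (2 * real j + 1)\<^sup>2 * (1 / (2 * real j + 1))"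
      unfolding power_mult_distrib by (intro mult_left_mono wallis_ratio_sq_le) auto
    then show ?thesis
      using wallis_ratio_pos[of j] by (intro divide_left_mono) (auto simp: power2_eq_square)
  qed
  then have "(\<Sum>j<m. 2 / (2 * real j + 1)) \<le> test_vec m 0"
    unfolding test_vec_def tail_sum_def by (simp add: atLeast0LessThan sum_mono)
  with ln_le_sum_odd_inverse show ?thesis
    by (rule order_trans)
qed

lemma test_vec_diff:
  assumes "i < m"
  shows "real (Suc i) * (2 * real i + 1) * (test_vec m i - test_vec m (Suc i)) = flux m (Suc i)"
proof -
  \<comment> \<open>With 2i + 1 and 2i + 2 abstracted to positive atoms, field_simps can clear the denominators.\<close>
  define a where "a = 2 * real i + 1"
  define b where "b = a + 1"
  have ab: "real (Suc i) = b / 2" "2 * real i + 2 = b" "2 * real i + 1 = a"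
    by (simp_all add: a_def b_def)
  have "a > 0" "b > 0" "wallis_ratio i > 0"
    by (simp_all add: a_def b_def wallis_ratio_pos)
  then show ?thesis
    unfolding test_vec_def flux_def tail_sum_Suc[OF assms] wallis_ratio.simps ab
    by (simp add: field_simps power2_eq_square) (simp add: b_def algebra_simps)
qed

lemma flux_Suc:
  assumes "i < m"
  shows "flux m (Suc i) - flux m i = test_vec m i / 2"
proof -
  define a where "a = 2 * real i + 1"
  define b where "b = a + 1"
  have ab: "real (Suc i) = b / 2" "2 * real i + 2 = b" "2 * real i + 1 = a" "real i = (a - 1) / 2"
    by (simp_all add: a_def b_def)
  have "a > 0" "b > 0" "wallis_ratio i > 0"
    by (simp_all add: a_def b_def wallis_ratio_pos)
  then show ?thesis
    unfolding test_vec_def flux_def tail_sum_Suc[OF assms] wallis_ratio.simps ab(1-3) unfolding ab(4)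
    by (simp add: field_simps power2_eq_square) (simp add: b_def algebra_simps)
qed

lemma Dmat_carrier: "Dmat m \<in> carrier_mat m m"
  by (simp add: Dmat_def)

lemma Dmat_sym: "i < m \<Longrightarrow> j < m \<Longrightarrow> Dmat m $$ (i, j) = Dmat m $$ (j, i)"
  by (auto simp: Dmat_def Let_def)

lemma Dmat_mult_row:
  assumes "i < m" and "x m = 0"
  shows "(\<Sum>j<m. Dmat m $$ (i, j) * x j)
    = real (Suc i) * (2 * real i + 1) * (x i - x (Suc i))
      - real i * (2 * real i - 1) * (x (i - 1) - x i) - x i / 2"
proof -
  define d where "d = 4 * (real i + 1)\<^sup>2 - 6 * (real i + 1) + 5 / 2"
  \<comment> \<open>At i = 0 the truncated index i - 1 is harmless: its weight real i * (2 * real i - 1) vanishes.\<close>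
  have entry: "Dmat m $$ (i, j) * x j
      = (if j = i then d * x j else 0)
      + (if j = Suc i then - real (Suc i) * (2 * real i + 1) * x j else 0)
      + (if j = i - 1 then - real i * (2 * real i - 1) * x j else 0)"
    if "j < Suc m" for j
  proof (cases "j = m")
    case True
    then show ?thesis
      using \<open>i < m\<close> \<open>x m = 0\<close> by auto
  next
    case False
    with that \<open>i < m\<close> show ?thesis
      by (auto simp: Dmat_def Let_def d_def algebra_simps)
  qed
  \<comment> \<open>Since x m = 0, the sum may run up to m, so that the neighbour Suc i is always in range.\<close>
  have "(\<Sum>j<m. Dmat m $$ (i, j) * x j) = (\<Sum>j<Suc m. Dmat m $$ (i, j) * x j)"
    using \<open>x m = 0\<close> by simp
  also have "\<dots> = (\<Sum>j<Suc m. (if j = i then d * x j else 0)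
      + (if j = Suc i then - real (Suc i) * (2 * real i + 1) * x j else 0)
      + (if j = i - 1 then - real i * (2 * real i - 1) * x j else 0))"
    by (intro sum.cong refl entry) simp
  also have "\<dots> = d * x i - real (Suc i) * (2 * real i + 1) * x (Suc i)
      - real i * (2 * real i - 1) * x (i - 1)"
    using \<open>i < m\<close> by (simp only: sum.distrib sum.delta finite_lessThan lessThan_iff) (simp add: algebra_simps)
  finally show ?thesis
    by (simp add: d_def power2_eq_square algebra_simps)
qed

lemma test_vec_self: "test_vec m m = 0"
  by (simp add: test_vec_def tail_sum_def)

lemma Dmat_mult_test_vec:
  assumes "i < m"
  shows "(\<Sum>j<m. Dmat m $$ (i, j) * test_vec m j) = (if i = 0 then 1 else 0)"
proof -
  have "(\<Sum>j<m. Dmat m $$ (i, j) * test_vec m j)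
      = real (Suc i) * (2 * real i + 1) * (test_vec m i - test_vec m (Suc i))
        - real i * (2 * real i - 1) * (test_vec m (i - 1) - test_vec m i) - test_vec m i / 2"
    by (rule Dmat_mult_row[OF assms test_vec_self])
  also have "\<dots> = flux m i - real i * (2 * real i - 1) * (test_vec m (i - 1) - test_vec m i)"
    unfolding test_vec_diff[OF assms] using flux_Suc[OF assms] by simp
  also have "\<dots> = (if i = 0 then 1 else 0)"
  proof (cases i)
    case 0
    then show ?thesis
      by (simp add: flux_def)
  next
    case (Suc k)
    then show ?thesis
      using test_vec_diff[of k m] assms by (simp add: algebra_simps)
  qed
  finally show ?thesis .
qed

lemma quad_form_Dmat_test_vec:
  assumes "m \<ge> 1"
  shows "quad_form m (\<lambda>i j. Dmat m $$ (i, j)) (test_vec m) = test_vec m 0"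
proof -
  have "quad_form m (\<lambda>i j. Dmat m $$ (i, j)) (test_vec m)
      = (\<Sum>i<m. test_vec m i * (\<Sum>j<m. Dmat m $$ (i, j) * test_vec m j))"
    unfolding quad_form_def by (simp add: sum_distrib_left mult_ac)
  also have "\<dots> = (\<Sum>i<m. if i = 0 then test_vec m i else 0)"
    by (intro sum.cong refl) (simp add: Dmat_mult_test_vec)
  also have "\<dots> = test_vec m 0"
    using assms by simp
  finally show ?thesis .
qed

theorem proposition4p5:
  fixes m :: nat
  assumes "m \<ge> 1"
  shows "lambda_min (Dmat m) < 1 / ln (real m + 1/2)"
proof -
  define L where "L = ln (real m + 1/2)"
  define x where "x = test_vec m"
  have "0 < L"
    using assms by (simp add: L_def)
  have "L < ln (2 * real m + 1)"
    using assms by (simp add: L_def)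
  also have "\<dots> \<le> x 0"
    unfolding x_def by (rule ln_le_test_vec_0)
  finally have "L < x 0" .
  then have "quad_form m (\<lambda>i j. Dmat m $$ (i, j)) x < 1 / L * (x 0)\<^sup>2"
    using \<open>0 < L\<close> quad_form_Dmat_test_vec[OF assms] by (simp add: x_def field_simps power2_eq_square)
  also have "\<dots> \<le> 1 / L * sq_norm m x"
    using \<open>0 < L\<close> assms by (intro mult_left_mono sq_le_sq_norm) auto
  finally obtain t where "t < 1 / L" and "eigenvalue (Dmat m) t"
    using exists_eigenvalue_less_rayleigh_quotient[OF Dmat_carrier Dmat_sym] by blast
  then show ?thesis
    using lambda_min_le_eigenvalue[OF Dmat_carrier] by (fastforce simp: L_def)
qed

end
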